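(* There exist constants $C>0$, $\alpha>0$ and $T_0>0$ such that for all $T\ge T_0$ and all $B\in(-\frac1{3T},\frac1{3T})$, $$\|e^{\alpha\tau}\tilde u^{\{T\}}_B\|_{L^2((0,T),d\tau)}\le C.$$
   Context: For $B\in\mathbb R$ and $T>0$ with $|B|T<\frac13$, $\mathcal H^{\{T\}}_B$ is the self-adjoint operator in $L^2((0,T),(1-B\tau)d\tau)$ associated with the quadratic form $u\mapsto\int_0^T|u'(\tau)|^2(1-B\tau)\,d\tau-|u(0)|^2$ on $\{u\in H^1(0,T):u(T)=0\}$ (formally $-\frac{d^2}{d\tau^2}+\frac{B}{1-B\tau}\frac{d}{d\tau}$ with $u'(0)=-u(0)$, $u(T)=0$). Let $u^{\{T\}}_B$ be a ground state (eigenfunction for its lowest eigenvalue $\lambda_1(\mathcal H^{\{T\}}_B)$) normalized in $L^2((0,T),(1-B\tau)d\tau)$, and $\tilde u^{\{T\}}_B(\tau)=(1-B\tau)^{1/2}u^{\{T\}}_B(\tau)$, which is normalized in $L^2((0,T),d\tau)$. *)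

theory Defs
  imports "HOL-Analysis.Analysis"
begin

definition H1_with_deriv :: "real \<Rightarrow> (real \<Rightarrow> real) \<Rightarrow> (real \<Rightarrow> real) \<Rightarrow> bool" where
  "H1_with_deriv T u u' \<longleftrightarrow>
     set_integrable lborel {0..T} u' \<and>
     set_integrable lborel {0..T} (\<lambda>x. (u' x)\<^sup>2) \<and>
     (\<forall>x\<in>{0..T}. u x = u 0 + (LBINT s=0..x. u' s))"

definition form_dom :: "real \<Rightarrow> (real \<Rightarrow> real) \<Rightarrow> (real \<Rightarrow> real) \<Rightarrow> bool" where
  "form_dom T u u' \<longleftrightarrow> H1_with_deriv T u u' \<and> u T = 0"

text \<open>Eigenpair of the operator H_B^{T} associated with the quadratic form
  q(u) = int_0^T |u'|^2 (1 - B tau) dtau - |u(0)|^2 in L^2((0,T),(1-B tau)dtau):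
  u in the form domain, u nonzero, and q(u,v) = lambda <u,v> for all v in the form domain.\<close>
definition is_eigenpair :: "real \<Rightarrow> real \<Rightarrow> real \<Rightarrow> (real \<Rightarrow> real) \<Rightarrow> bool" where
  "is_eigenpair B T lam u \<longleftrightarrow>
     (\<exists>u'. form_dom T u u' \<and>
        (LBINT x=0..T. (u x)\<^sup>2 * (1 - B * x)) \<noteq> 0 \<and>
        (\<forall>v v'. form_dom T v v' \<longrightarrow>
           (LBINT x=0..T. u' x * v' x * (1 - B * x)) - u 0 * v 0
             = lam * (LBINT x=0..T. u x * v x * (1 - B * x))))"

definition is_normalized_ground_state :: "real \<Rightarrow> real \<Rightarrow> real \<Rightarrow> (real \<Rightarrow> real) \<Rightarrow> bool" where
  "is_normalized_ground_state B T lam u \<longleftrightarrow>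
     is_eigenpair B T lam u \<and>
     (\<forall>mu v. is_eigenpair B T mu v \<longrightarrow> lam \<le> mu) \<and>
     (LBINT x=0..T. (u x)\<^sup>2 * (1 - B * x)) = 1"

end

theory Submission
  imports Defs
begin

text \<open>
  Write \<open>\<rho>(\<tau>) = 1 - B\<tau>\<close>. For \<open>T \<ge> 3\<close> the lowest eigenvalue is at most \<open>-1/4\<close>, by shooting from
  \<open>\<tau> = T\<close>: the solution of \<open>(\<rho>v')' = m\<rho>v\<close>, \<open>v(T) = 0\<close>, \<open>\<rho>(T)v'(T) = -1\<close> is an entire power series in \<open>m\<close>
  (summed Picard iterates), and it is an eigenfunction with eigenvalue \<open>-m\<close> as soon as the Robin
  condition \<open>v'(0) = -v(0)\<close> holds. The quotient \<open>r = v/(-\<rho>v')\<close> solves the Riccati equation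
  \<open>r' = m\<rho>r\<^sup>2 - 1/\<rho>\<close> with \<open>r(T) = 0\<close>; a barrier argument at the level \<open>r = 1\<close> gives \<open>r(0) \<le> 1\<close> for
  \<open>m = 4\<close> and \<open>r(0) \<ge> 1\<close> for \<open>m = 1/4\<close>, so by the intermediate value theorem the Robin condition
  holds for some \<open>m \<in> [1/4, 4]\<close>.

  Once \<open>\<lambda> \<le> -1/4\<close>, testing the eigenvalue equation of the ground state \<open>u\<close> with \<open>exp(\<tau>/2) u\<close> and
  completing a square gives \<open>(3/16) \<integral> exp(\<tau>/2) \<rho> u\<^sup>2 \<le> u(0)\<^sup>2\<close>, while testing with \<open>u\<close> itself gives
  \<open>\<integral> \<rho> u'\<^sup>2 \<le> u(0)\<^sup>2\<close>, which with a trace inequality on \<open>[0, 1/6]\<close> yields \<open>|u(0)| \<le> 10\<close>.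
  Hence the theorem holds with \<open>\<alpha> = 1/4\<close>, \<open>C = 24\<close> and \<open>T\<^sub>0 = 3\<close>.
\<close>

section \<open>Calculus on compact intervals\<close>

lemma has_real_derivative_integral_upper:
  fixes f :: "real \<Rightarrow> real"
  assumes "continuous_on {a..b} f" "x \<in> {a..b}"
  shows "((\<lambda>x. integral {x..b} f) has_real_derivative - f x) (at x within {a..b})"
proof -
  have int: "f integrable_on {a..b}" using assms(1) integrable_continuous_real by blast
  have "((\<lambda>y. integral {a..b} f - integral {a..y} f) has_real_derivative 0 - f x) (at x within {a..b})"
    by (intro derivative_intros integral_has_real_derivative assms)
  then have "((\<lambda>y. integral {a..b} f - integral {a..y} f) has_real_derivative - f x) (at x within {a..b})"
    by simp
  then show ?thesis
  proof (rule has_field_derivative_transform_within[where d=1])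
    show "x \<in> {a..b}" by (rule assms(2))
    fix y assume "y \<in> {a..b}"
    then show "integral {a..b} f - integral {a..y} f = integral {y..b} f"
      using Henstock_Kurzweil_Integration.integral_combine[OF _ _ int, of y] by auto
  qed simp
qed

lemma continuous_on_integral_upper:
  fixes f :: "real \<Rightarrow> real"
  assumes "continuous_on {a..b} f"
  shows "continuous_on {a..b} (\<lambda>x. integral {x..b} f)"
  using has_real_derivative_integral_upper[OF assms]
  by (meson DERIV_continuous continuous_on_eq_continuous_within)

lemma integral_upper_nonneg:
  fixes f :: "real \<Rightarrow> real"
  assumes "continuous_on {a..b} f" "x \<in> {a..b}" "\<And>t. t \<in> {a..b} \<Longrightarrow> 0 \<le> f t"
  shows "0 \<le> integral {x..b} f"
  using assms by (intro integral_nonneg integrable_continuous_interval) (auto intro: continuous_on_subset)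

lemma integral_power_over_fact:
  fixes b c x :: real
  assumes "x \<le> b"
  shows "integral {x..b} (\<lambda>t. c * (b-t)^k / fact k) = c * (b-x)^(Suc k) / fact (Suc k)"
proof -
  let ?F = "\<lambda>t. - c * (b-t)^(Suc k) / fact (Suc k)"
  have "((\<lambda>t. c * (b-t)^k / fact k) has_integral ?F b - ?F x) {x..b}"
  proof (rule fundamental_theorem_of_calculus[OF assms])
    fix t assume "t \<in> {x..b}"
    have "(?F has_real_derivative - c * (real (Suc k) * (b-t)^k * (0 - 1)) / fact (Suc k)) (at t within {x..b})"
      by (intro derivative_eq_intros) auto
    moreover have "- c * (real (Suc k) * (b-t)^k * (0 - 1)) / fact (Suc k) = c * (b-t)^k / fact k"
      using add_pos_nonneg[of "fact k" "fact k * real k :: real"] by (simp add: fact_Suc field_simps)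
    ultimately show "(?F has_vector_derivative c * (b-t)^k / fact k) (at t within {x..b})"
      by (simp add: has_real_derivative_iff_has_vector_derivative)
  qed
  then show ?thesis by (auto dest: integral_unique)
qed

lemma integral_upper_abs_le_power:
  fixes f :: "real \<Rightarrow> real"
  assumes cont: "continuous_on {a..b} f" and x: "x \<in> {a..b}"
    and bnd: "\<And>t. t \<in> {a..b} \<Longrightarrow> \<bar>f t\<bar> \<le> c * (b-t)^k / fact k"
  shows "\<bar>integral {x..b} f\<bar> \<le> c * (b-x)^(Suc k) / fact (Suc k)"
proof -
  have sub: "{x..b} \<subseteq> {a..b}" using x by auto
  have "norm (integral {x..b} f) \<le> integral {x..b} (\<lambda>t. c * (b-t)^k / fact k)"
    by (rule integral_norm_bound_integral)
       (use bnd sub in \<open>auto intro!: integrable_continuous_interval continuous_on_subset[OF cont sub]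
          continuous_intros\<close>)
  also have "\<dots> = c * (b-x)^(Suc k) / fact (Suc k)" by (rule integral_power_over_fact) (use x in auto)
  finally show ?thesis by simp
qed

lemma power_over_fact_mono:
  fixes b c x :: real
  assumes "0 \<le> x" "x \<le> b" "k \<le> j" "0 \<le> c"
  shows "c * (b-x)^j / fact j \<le> c * b^j / fact k"
proof -
  have "c * (b-x)^j \<le> c * b^j" by (intro mult_left_mono power_mono) (use assms in auto)
  then have "c * (b-x)^j / fact j \<le> c * b^j / fact j" by (rule divide_right_mono) simp
  also have "\<dots> \<le> c * b^j / fact k"
    by (rule divide_left_mono) (use assms in \<open>auto intro: fact_mono\<close>)
  finally show ?thesis .
qed

lemma summable_mult_exp_series: "summable (\<lambda>n. c * (a^n / fact n :: real))"
  using summable_mult[OF summable_exp[of a]] by (simp add: field_simps)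

lemma has_real_derivative_suminf:
  fixes f f' :: "nat \<Rightarrow> real \<Rightarrow> real"
  assumes S: "convex S"
    and D: "\<And>n x. x \<in> S \<Longrightarrow> (f n has_real_derivative f' n x) (at x within S)"
    and M: "\<And>n x. x \<in> S \<Longrightarrow> \<bar>f' n x\<bar> \<le> M n" "summable M"
    and summ: "\<And>x. x \<in> S \<Longrightarrow> summable (\<lambda>n. f n x)"
    and x: "x \<in> S"
  shows "((\<lambda>x. \<Sum>n. f n x) has_real_derivative (\<Sum>n. f' n x)) (at x within S)"
proof -
  have "uniform_limit S (\<lambda>N x. \<Sum>n<N. f' n x) (\<lambda>x. \<Sum>n. f' n x) sequentially"
    by (rule Weierstrass_m_test[OF _ M(2)]) (use M(1) in simp)
  then obtain g where g: "\<forall>y\<in>S. (\<lambda>n. f n y) sums g y \<and> (g has_real_derivative (\<Sum>n. f' n y)) (at y within S)"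
    using has_field_derivative_series[OF S D _ x summ[OF x]] by blast
  then have "(g has_real_derivative (\<Sum>n. f' n x)) (at x within S)" using x by blast
  then show ?thesis
    by (rule has_field_derivative_transform_within[where d=1]) (use g x in \<open>auto simp: sums_iff\<close>)
qed

text \<open>If \<open>g x > 0\<close>, then at the supremum of the points of \<open>[a, x]\<close> where \<open>g \<le> 0\<close> the function
  vanishes, so it decreases there, contradicting the choice of that supremum.\<close>

lemma nonpos_if_deriv_neg_at_zeros:
  fixes g g' :: "real \<Rightarrow> real"
  assumes D: "\<And>x. x \<in> {a..b} \<Longrightarrow> (g has_real_derivative g' x) (at x within {a..b})"
    and ga: "g a \<le> 0"
    and Z: "\<And>x. x \<in> {a..b} \<Longrightarrow> g x = 0 \<Longrightarrow> g' x < 0"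
    and x: "x \<in> {a..b}"
  shows "g x \<le> 0"
proof (rule ccontr)
  assume "\<not> g x \<le> 0"
  then have x1: "x \<in> {a..b}" "g x > 0" using x by auto
  have cont: "continuous_on {a..b} g"
    using D by (meson DERIV_continuous continuous_on_eq_continuous_within)
  have cont1: "continuous_on {a..x} g" by (rule continuous_on_subset[OF cont]) (use x1 in auto)
  define S where "S = {a..x} \<inter> g -` {..0}"
  have clS: "closed S" unfolding S_def by (rule continuous_closed_preimage[OF cont1]) auto
  have aS: "a \<in> S" unfolding S_def using ga x1 by auto
  have bdd: "bdd_above S" unfolding S_def by (rule bdd_aboveI[of _ x]) auto
  define x0 where "x0 = Sup S"
  have x0S: "x0 \<in> S" unfolding x0_def by (rule closed_contains_Sup[OF _ bdd clS]) (use aS in auto)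
  have le: "y \<le> x0" if "y \<in> S" for y unfolding x0_def by (rule cSup_upper[OF that bdd])
  have x0: "a \<le> x0" "x0 \<le> x" "g x0 \<le> 0" using x0S unfolding S_def by auto
  have lt: "x0 < x" using x0 x1 by (cases "x0 = x") auto
  have g0: "g x0 = 0"
  proof (rule ccontr)
    assume "g x0 \<noteq> 0"
    then have neg: "g x0 < 0" using x0 by auto
    have "continuous_on {x0..x} g" by (rule continuous_on_subset[OF cont1]) (use x0 in auto)
    then obtain z where z: "x0 \<le> z" "z \<le> x" "g z = 0"
      using IVT'[of g x0 0 x] neg x1 lt by auto
    then have "z \<in> S" unfolding S_def using x0 by auto
    then show False using le z neg by fastforce
  qed
  have x0ab: "x0 \<in> {a..b}" using x0 x1 by auto
  then obtain d where d: "d > 0" "\<And>h. h > 0 \<Longrightarrow> x0 + h \<in> {a..b} \<Longrightarrow> h < d \<Longrightarrow> g x0 > g (x0 + h)"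
    using has_real_derivative_neg_dec_right[OF D[OF x0ab]] Z[OF x0ab g0] by blast
  define h where "h = min (d/2) (x - x0)"
  have h: "h > 0" "h < d" "x0 + h \<le> x" using d lt unfolding h_def by auto
  have "g (x0 + h) < 0" using d(2)[OF h(1) _ h(2)] g0 h x0 x1 by auto
  then have "x0 + h \<in> S" unfolding S_def using h x0 by auto
  then show False using le h by fastforce
qed

lemma nonpos_if_deriv_pos_at_zeros:
  fixes g g' :: "real \<Rightarrow> real"
  assumes D: "\<And>x. x \<in> {a..b} \<Longrightarrow> (g has_real_derivative g' x) (at x within {a..b})"
    and gb: "g b \<le> 0"
    and Z: "\<And>x. x \<in> {a..b} \<Longrightarrow> g x = 0 \<Longrightarrow> g' x > 0"
    and x: "x \<in> {a..b}"
  shows "g x \<le> 0"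
proof -
  have img: "uminus ` {-b..-a} = {a..b::real}" by auto
  have "((\<lambda>y. g (-y)) has_real_derivative - g' (-y)) (at y within {-b..-a})" if "y \<in> {-b..-a}" for y
  proof -
    have "(g has_real_derivative g' (-y)) (at (-y) within uminus ` {-b..-a})"
      unfolding img using D[of "-y"] that by auto
    from DERIV_image_chain[OF this DERIV_minus[OF DERIV_ident]] show ?thesis by (simp add: o_def)
  qed
  from nonpos_if_deriv_neg_at_zeros[OF this, of "-x"] show ?thesis using gb Z x by auto
qed

lemma diff_le_if_deriv_le:
  fixes g g' :: "real \<Rightarrow> real"
  assumes ab: "a \<le> b"
    and D: "\<And>x. x \<in> {a..b} \<Longrightarrow> (g has_real_derivative g' x) (at x within {a..b})"
    and le: "\<And>x. x \<in> {a..b} \<Longrightarrow> g' x \<le> c"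
  shows "g b - g a \<le> c * (b - a)"
proof -
  have cont: "continuous_on {a..b} g" using D by (meson DERIV_continuous continuous_on_eq_continuous_within)
  have "(\<lambda>x. g x - c * x) b \<le> (\<lambda>x. g x - c * x) a"
  proof (rule DERIV_nonpos_imp_decreasing_open[OF ab])
    fix x assume x: "a < x" "x < b"
    then have "(g has_real_derivative g' x) (at x)" using D[of x] at_within_Icc_at[OF x] by simp
    then have "((\<lambda>x. g x - c * x) has_real_derivative g' x - c) (at x)"
      by (auto intro!: derivative_eq_intros)
    then show "\<exists>y. ((\<lambda>x. g x - c * x) has_real_derivative y) (at x) \<and> y \<le> 0" using le[of x] x by auto
  qed (intro continuous_intros cont)
  then show ?thesis by (simp add: algebra_simps)
qed

lemma abs_le_weighted_square:
  fixes a t :: real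
  assumes t: "0 < t"
  shows "\<bar>a\<bar> \<le> (t * a\<^sup>2 + 1/t) / 2"
proof -
  have "0 \<le> (t * \<bar>a\<bar> - 1)\<^sup>2" by simp
  then have "2 * t * \<bar>a\<bar> \<le> t\<^sup>2 * a\<^sup>2 + 1" by (simp add: power2_eq_square algebra_simps)
  then show ?thesis using t by (simp add: field_simps power2_eq_square)
qed

section \<open>Absolutely continuous functions on \<open>[0, b]\<close>\<close>

lemma interval_integral_Icc0:
  fixes f :: "real \<Rightarrow> real"
  shows "0 \<le> x \<Longrightarrow> (LBINT t=0..x. f t) = (LINT t:{0..x}|lborel. f t)"
  using interval_integral_Icc[of 0 x f] by (simp add: zero_ereal_def)

definition ac_primitive :: "real \<Rightarrow> (real \<Rightarrow> real) \<Rightarrow> (real \<Rightarrow> real) \<Rightarrow> bool" where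
  "ac_primitive b w w' \<longleftrightarrow>
     set_integrable lborel {0..b} w' \<and> (\<forall>x\<in>{0..b}. w x = w 0 + (LBINT t=0..x. w' t))"

lemma form_dom_iff:
  "form_dom T u u' \<longleftrightarrow>
     ac_primitive T u u' \<and> set_integrable lborel {0..T} (\<lambda>x. (u' x)\<^sup>2) \<and> u T = 0"
  unfolding form_dom_def H1_with_deriv_def ac_primitive_def by blast

lemma ac_primitive_integrable: "ac_primitive b w w' \<Longrightarrow> set_integrable lborel {0..b} w'"
  by (simp add: ac_primitive_def)

lemma ac_primitive_eq: "ac_primitive b w w' \<Longrightarrow> x \<in> {0..b} \<Longrightarrow> w x = w 0 + (LBINT t=0..x. w' t)"
  unfolding ac_primitive_def by blast

lemma ac_primitive_subinterval:
  assumes w: "ac_primitive b w w'" and cb: "c \<le> b"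
  shows "ac_primitive c w w'"
  unfolding ac_primitive_def
proof (intro conjI ballI)
  show "set_integrable lborel {0..c} w'"
    by (rule set_integrable_subset[OF ac_primitive_integrable[OF w]]) (use cb in auto)
  show "w x = w 0 + (LBINT t=0..x. w' t)" if "x \<in> {0..c}" for x
    by (rule ac_primitive_eq[OF w]) (use that cb in auto)
qed

lemma ac_primitive_continuous:
  assumes w: "ac_primitive b w w'"
  shows "continuous_on {0..b} w"
proof -
  have wi: "set_integrable lborel {0..b} w'" by (rule ac_primitive_integrable[OF w])
  have eq: "w x = w 0 + integral {0..x} w'" if x: "x \<in> {0..b}" for x
  proof -
    have "set_integrable lborel {0..x} w'" by (rule set_integrable_subset[OF wi]) (use x in auto)
    then have "(LBINT t=0..x. w' t) = integral {0..x} w'"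
      using x interval_integral_eq_integral[of 0 x w'] by (simp add: zero_ereal_def)
    then show ?thesis using ac_primitive_eq[OF w x] by simp
  qed
  have "continuous_on {0..b} (\<lambda>x. w 0 + integral {0..x} w')"
    by (intro continuous_intros indefinite_integral_continuous_1 set_borel_integral_eq_integral(1)[OF wi])
  then show ?thesis using eq by (metis (no_types, lifting) continuous_on_cong)
qed

lemma set_integrable_continuous_mult:
  fixes c w' :: "real \<Rightarrow> real"
  assumes c: "continuous_on {a..b} c" and w: "set_integrable lborel {a..b} w'"
  shows "set_integrable lborel {a..b} (\<lambda>x. c x * w' x)"
proof -
  obtain C where C: "\<And>x. x \<in> {a..b} \<Longrightarrow> \<bar>c x\<bar> \<le> C"
    using compact_imp_bounded[OF compact_continuous_image[OF c compact_Icc]]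
    unfolding bounded_iff by (metis image_eqI real_norm_def)
  have m1: "(\<lambda>x. indicator {a..b} x * c x) \<in> borel_measurable lborel"
    using borel_measurable_continuous_on_indicator[OF _ c] by simp
  have m2: "(\<lambda>x. indicator {a..b} x * w' x) \<in> borel_measurable lborel"
    using w unfolding set_integrable_def by (simp add: borel_measurable_integrable)
  have "(\<lambda>x. indicator {a..b} x *\<^sub>R (c x * w' x))
      = (\<lambda>x. (indicator {a..b} x * c x) * (indicator {a..b} x * w' x))"
    by (auto simp: indicator_def)
  then have meas: "set_borel_measurable lborel {a..b} (\<lambda>x. c x * w' x)"
    unfolding set_borel_measurable_def using m1 m2 by simp
  show ?thesis
  proof (rule set_integrable_bound[OF set_integrable_mult_right[OF w, of C] meas])
    show "AE x in lborel. x \<in> {a..b} \<longrightarrow> norm (c x * w' x) \<le> norm (C * w' x)"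
    proof (intro AE_I2 impI)
      fix x assume x: "x \<in> {a..b}"
      have "\<bar>c x\<bar> * \<bar>w' x\<bar> \<le> \<bar>C\<bar> * \<bar>w' x\<bar>"
        by (rule mult_right_mono) (use C[OF x] in auto)
      then show "norm (c x * w' x) \<le> norm (C * w' x)" by (simp add: abs_mult)
    qed
  qed
qed

lemma set_integral_FTC:
  fixes g g' :: "real \<Rightarrow> real"
  assumes sb: "s \<le> b" and sub: "{s..b} \<subseteq> S"
    and gd: "\<And>x. x \<in> S \<Longrightarrow> (g has_real_derivative g' x) (at x within S)"
    and gc: "continuous_on {s..b} g'"
  shows "(LINT t:{s..b}|lborel. g' t) = g b - g s"
proof -
  have "(LBINT t=s..b. g' t) = g b - g s"
  proof (rule interval_integral_FTC_finite)
    show "continuous_on {min s b..max s b} g'" using gc sb by simp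
    fix x assume "min s b \<le> x" "x \<le> max s b"
    then have x: "x \<in> {s..b}" using sb by auto
    have "(g has_real_derivative g' x) (at x within {s..b})"
      by (rule DERIV_subset[OF gd sub]) (use x sub in auto)
    then show "(g has_vector_derivative g' x) (at x within {min s b..max s b})"
      using sb by (simp add: has_real_derivative_iff_has_vector_derivative)
  qed
  then show ?thesis by (simp add: interval_integral_Icc[OF sb])
qed

lemma integrable_triangle_product:
  fixes W G :: "real \<Rightarrow> real"
  assumes iW: "integrable lborel W" and iG: "integrable lborel G"
  shows "integrable (lborel \<Otimes>\<^sub>M lborel) (\<lambda>(s,t). if s \<le> t then W s * G t else 0)"
proof -
  have [measurable]: "W \<in> borel_measurable lborel" "G \<in> borel_measurable lborel"
    using iW iG by (simp_all add: borel_measurable_integrable)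
  have H: "integrable (lborel \<Otimes>\<^sub>M lborel) (\<lambda>(s,t). W s * G t)"
  proof (rule lborel_pair.Fubini_integrable)
    show "(\<lambda>(s,t). W s * G t) \<in> borel_measurable (lborel \<Otimes>\<^sub>M lborel)" by measurable
    show "integrable lborel (\<lambda>s. \<integral>t. norm ((\<lambda>(s,t). W s * G t) (s, t)) \<partial>lborel)"
      using integrable_mult_left[OF integrable_abs[OF iW]] by (simp add: abs_mult)
    show "AE s in lborel. integrable lborel (\<lambda>t. (\<lambda>(s,t). W s * G t) (s, t))"
      using integrable_mult_right[OF iG] by simp
  qed
  show ?thesis
  proof (rule Bochner_Integration.integrable_bound[OF H])
    show "(\<lambda>(s,t). if s \<le> t then W s * G t else 0) \<in> borel_measurable (lborel \<Otimes>\<^sub>M lborel)"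
      by measurable
    show "AE x in lborel \<Otimes>\<^sub>M lborel.
        norm ((\<lambda>(s,t). if s \<le> t then W s * G t else 0) x) \<le> norm ((\<lambda>(s,t). W s * G t) x)"
      by (rule AE_I2) auto
  qed
qed

lemma set_integral_triangle_swap:
  fixes g' w' :: "real \<Rightarrow> real"
  assumes gc: "continuous_on {0..b} g'" and w: "set_integrable lborel {0..b} w'"
  shows "(LINT s:{0..b}|lborel. w' s * (LINT t:{s..b}|lborel. g' t))
       = (LINT t:{0..b}|lborel. g' t * (LINT s:{0..t}|lborel. w' s))"
proof -
  define W where "W s = indicator {0..b} s * w' s" for s
  define G where "G t = indicator {0..b} t * g' t" for t
  define f where "f s t = (if s \<le> t then W s * G t else 0)" for s t
  have "integrable lborel W" using w unfolding set_integrable_def W_def by simp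
  moreover have "integrable lborel G"
    using borel_integrable_atLeastAtMost'[OF gc] unfolding set_integrable_def G_def by simp
  ultimately have "integrable (lborel \<Otimes>\<^sub>M lborel) (case_prod f)"
    unfolding f_def by (rule integrable_triangle_product)
  then have swap: "(\<integral>t. (\<integral>s. f s t \<partial>lborel) \<partial>lborel) = (\<integral>s. (\<integral>t. f s t \<partial>lborel) \<partial>lborel)"
    by (rule lborel_pair.Fubini_integral)
  have inner_t: "(\<integral>t. f s t \<partial>lborel) = indicator {0..b} s * (w' s * (LINT t:{s..b}|lborel. g' t))" for s
  proof (cases "s \<in> {0..b}")
    case True
    then have "(\<lambda>t. f s t) = (\<lambda>t. W s * (indicator {s..b} t * g' t))"
      by (auto simp: f_def G_def indicator_def)
    then show ?thesis using True by (simp add: W_def set_lebesgue_integral_def)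
  next
    case False
    then have "(\<lambda>t. f s t) = (\<lambda>t. 0)" by (auto simp: f_def W_def)
    then show ?thesis using False by simp
  qed
  have inner_s: "(\<integral>s. f s t \<partial>lborel) = indicator {0..b} t * (g' t * (LINT s:{0..t}|lborel. w' s))" for t
  proof (cases "t \<in> {0..b}")
    case True
    then have "(\<lambda>s. f s t) = (\<lambda>s. G t * (indicator {0..t} s * w' s))"
      by (auto simp: f_def W_def indicator_def)
    then show ?thesis using True by (simp add: G_def set_lebesgue_integral_def)
  next
    case False
    then have "(\<lambda>s. f s t) = (\<lambda>s. 0)" by (auto simp: f_def G_def)
    then show ?thesis using False by simp
  qed
  show ?thesis using swap unfolding inner_t inner_s by (simp add: set_lebesgue_integral_def)
qed

text \<open>Since \<open>w'\<close> is only integrable, both sides are written as the same double integral over the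
  triangle \<open>0 \<le> s \<le> t \<le> b\<close>.\<close>

lemma ac_primitive_integration_by_parts:
  fixes g g' w w' :: "real \<Rightarrow> real"
  assumes b: "0 \<le> b"
    and gd: "\<And>x. x \<in> {0..b} \<Longrightarrow> (g has_real_derivative g' x) (at x within {0..b})"
    and gc: "continuous_on {0..b} g'"
    and w: "ac_primitive b w w'"
  shows "(LBINT x=0..b. g x * w' x) = g b * w b - g 0 * w 0 - (LBINT x=0..b. g' x * w x)"
proof -
  have wi: "set_integrable lborel {0..b} w'" by (rule ac_primitive_integrable[OF w])
  have contg: "continuous_on {0..b} g"
    using gd by (meson DERIV_continuous continuous_on_eq_continuous_within)
  have contw: "continuous_on {0..b} w" by (rule ac_primitive_continuous[OF w])
  have g_diff: "(LINT t:{s..b}|lborel. g' t) = g b - g s" if s: "s \<in> {0..b}" for s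
    by (rule set_integral_FTC[OF _ _ gd]) (use s in \<open>auto intro: continuous_on_subset[OF gc]\<close>)
  have w_diff: "(LINT t:{0..x}|lborel. w' t) = w x - w 0" if x: "x \<in> {0..b}" for x
    using ac_primitive_eq[OF w x] interval_integral_Icc0[of x w'] x by simp
  have "(LINT s:{0..b}|lborel. w' s * (g b - g s)) = (LINT s:{0..b}|lborel. w' s * (LINT t:{s..b}|lborel. g' t))"
    by (rule set_lebesgue_integral_cong) (auto simp: g_diff)
  also have "\<dots> = (LINT t:{0..b}|lborel. g' t * (LINT s:{0..t}|lborel. w' s))"
    by (rule set_integral_triangle_swap[OF gc wi])
  also have "\<dots> = (LINT t:{0..b}|lborel. g' t * w t - g' t * w 0)"
    by (rule set_lebesgue_integral_cong) (auto simp: w_diff algebra_simps)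
  finally have swap: "(LINT s:{0..b}|lborel. g b * w' s - g s * w' s)
      = (LINT t:{0..b}|lborel. g' t * w t - g' t * w 0)"
    by (simp add: algebra_simps)
  have i1: "set_integrable lborel {0..b} (\<lambda>x. g x * w' x)"
    by (rule set_integrable_continuous_mult[OF contg wi])
  have i2: "set_integrable lborel {0..b} (\<lambda>x. g b * w' x)" using wi by simp
  have i3: "set_integrable lborel {0..b} (\<lambda>x. g' x * w x)"
    by (rule borel_integrable_atLeastAtMost') (intro continuous_intros gc contw)
  have i4: "set_integrable lborel {0..b} (\<lambda>x. g' x * w 0)"
    by (rule borel_integrable_atLeastAtMost') (intro continuous_intros gc)
  have "(LINT t:{0..b}|lborel. g' t * w 0) = w 0 * (g b - g 0)"
    using g_diff[of 0] b by (simp add: mult.commute)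
  moreover have "(LINT s:{0..b}|lborel. g b * w' s) = g b * (w b - w 0)"
    using w_diff[of b] b by simp
  ultimately show ?thesis
    using swap set_integral_diff(2)[OF i2 i1] set_integral_diff(2)[OF i3 i4]
    by (simp add: interval_integral_Icc0[OF b] algebra_simps)
qed

lemma ac_primitive_mult:
  fixes g g' w w' :: "real \<Rightarrow> real"
  assumes w: "ac_primitive b w w'"
    and gd: "\<And>x. x \<in> {0..b} \<Longrightarrow> (g has_real_derivative g' x) (at x within {0..b})"
    and gc: "continuous_on {0..b} g'"
  shows "ac_primitive b (\<lambda>x. g x * w x) (\<lambda>x. g' x * w x + g x * w' x)"
  unfolding ac_primitive_def
proof (intro conjI ballI)
  have contw: "continuous_on {0..b} w" by (rule ac_primitive_continuous[OF w])
  have contg: "continuous_on {0..b} g"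
    using gd by (meson DERIV_continuous continuous_on_eq_continuous_within)
  have i1: "set_integrable lborel {0..c} (\<lambda>x. g' x * w x)" if "c \<le> b" for c
    by (rule borel_integrable_atLeastAtMost')
       (use that in \<open>auto intro!: continuous_intros continuous_on_subset[OF gc] continuous_on_subset[OF contw]\<close>)
  have i2: "set_integrable lborel {0..c} (\<lambda>x. g x * w' x)" if "c \<le> b" for c
    using ac_primitive_integrable[OF ac_primitive_subinterval[OF w that]] that
    by (intro set_integrable_continuous_mult continuous_on_subset[OF contg]) auto
  show "set_integrable lborel {0..b} (\<lambda>x. g' x * w x + g x * w' x)"
    using set_integral_add(1)[OF i1 i2] by simp
  fix x assume x: "x \<in> {0..b}"
  have "(LBINT t=0..x. g t * w' t) = g x * w x - g 0 * w 0 - (LBINT t=0..x. g' t * w t)"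
    by (rule ac_primitive_integration_by_parts ac_primitive_subinterval[OF w])
       (use x in \<open>auto intro: DERIV_subset[OF gd] continuous_on_subset[OF gc] ac_primitive_subinterval[OF w]\<close>)
  then show "g x * w x = g 0 * w 0 + (LBINT t=0..x. g' t * w t + g t * w' t)"
    using x set_integral_add(2)[OF i1 i2, of x] by (simp add: interval_integral_Icc0)
qed

lemma form_dom_mult:
  fixes g g' u u' :: "real \<Rightarrow> real"
  assumes u: "form_dom b u u'"
    and gd: "\<And>x. x \<in> {0..b} \<Longrightarrow> (g has_real_derivative g' x) (at x within {0..b})"
    and gc: "continuous_on {0..b} g'"
  shows "form_dom b (\<lambda>x. g x * u x) (\<lambda>x. g' x * u x + g x * u' x)"
proof -
  have ac: "ac_primitive b u u'" and u'2: "set_integrable lborel {0..b} (\<lambda>x. (u' x)\<^sup>2)"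
    and ub: "u b = 0" using u by (auto simp: form_dom_iff)
  have contu: "continuous_on {0..b} u" by (rule ac_primitive_continuous[OF ac])
  have contg: "continuous_on {0..b} g"
    using gd by (meson DERIV_continuous continuous_on_eq_continuous_within)
  have i1: "set_integrable lborel {0..b} (\<lambda>x. (g' x * u x)\<^sup>2)"
    by (rule borel_integrable_atLeastAtMost') (intro continuous_intros gc contu)
  have i2: "set_integrable lborel {0..b} (\<lambda>x. (2 * g' x * g x * u x) * u' x)"
    by (intro set_integrable_continuous_mult continuous_intros gc contg contu ac_primitive_integrable[OF ac])
  have i3: "set_integrable lborel {0..b} (\<lambda>x. (g x)\<^sup>2 * (u' x)\<^sup>2)"
    by (intro set_integrable_continuous_mult continuous_intros contg u'2)
  have "set_integrable lborel {0..b} (\<lambda>x. (g' x * u x + g x * u' x)\<^sup>2)"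
    using set_integral_add(1)[OF set_integral_add(1)[OF i1 i2] i3]
    by (simp add: power2_eq_square algebra_simps)
  then show ?thesis using ac_primitive_mult[OF ac gd gc] ub by (simp add: form_dom_iff)
qed

lemma set_integral_mono_set:
  fixes f :: "real \<Rightarrow> real"
  assumes fi: "set_integrable lborel B f" and AB: "A \<subseteq> B" and As: "A \<in> sets lborel"
    and nn: "\<And>x. x \<in> B \<Longrightarrow> 0 \<le> f x"
  shows "(LINT x:A|lborel. f x) \<le> (LINT x:B|lborel. f x)"
proof -
  have eq: "(\<lambda>x. indicator B x *\<^sub>R (indicator A x * f x)) = (\<lambda>x. indicator A x *\<^sub>R f x)"
    using AB by (auto simp: indicator_def fun_eq_iff)
  have "set_integrable lborel B (\<lambda>x. indicator A x * f x)"
    using set_integrable_subset[OF fi As AB] unfolding set_integrable_def eq .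
  then have "(LINT x:B|lborel. indicator A x * f x) \<le> (LINT x:B|lborel. f x)"
    by (rule set_integral_mono[OF _ fi]) (use nn in \<open>auto simp: indicator_def\<close>)
  then show ?thesis unfolding set_lebesgue_integral_def eq .
qed

lemma set_integral_nonneg:
  fixes f :: "real \<Rightarrow> real"
  assumes "\<And>x. x \<in> A \<Longrightarrow> 0 \<le> f x"
  shows "0 \<le> (LINT x:A|lborel. f x)"
  unfolding set_lebesgue_integral_def
  by (rule integral_nonneg_AE) (use assms in \<open>auto simp: indicator_def\<close>)

lemma ac_primitive_value_at_0:
  assumes d: "0 < d" and w: "ac_primitive d w w'"
  shows "d * w 0 = (LINT x:{0..d}|lborel. w x - (d - x) * w' x)"
proof -
  have d0: "0 \<le> d" using d by simp
  have gd: "((\<lambda>x. d - x) has_real_derivative -1) (at x within {0..d})" for x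
    by (auto intro!: derivative_eq_intros)
  have "(LBINT x=0..d. (d - x) * w' x) = (d - d) * w d - (d - 0) * w 0 - (LBINT x=0..d. -1 * w x)"
    by (rule ac_primitive_integration_by_parts[OF d0 gd _ w]) simp
  moreover have iw: "set_integrable lborel {0..d} w"
    by (rule borel_integrable_atLeastAtMost'[OF ac_primitive_continuous[OF w]])
  moreover have "set_integrable lborel {0..d} (\<lambda>x. (d - x) * w' x)"
    by (intro set_integrable_continuous_mult continuous_intros ac_primitive_integrable[OF w])
  ultimately show ?thesis by (simp add: interval_integral_Icc0[OF d0] set_integral_uminus[OF iw])
qed

lemma abs_trace_integrand_le:
  fixes a b d q x :: real
  assumes x: "0 \<le> x" "x \<le> d" and q: "0 < q"
  shows "\<bar>a - (d - x) * b\<bar> \<le> 1/2 * a\<^sup>2 + d * q / 2 * b\<^sup>2 + (1/2 + d / (2 * q))"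
proof -
  have "\<bar>a - (d - x) * b\<bar> \<le> \<bar>a\<bar> + d * \<bar>b\<bar>"
    using x abs_triangle_ineq4[of a "(d - x) * b"] mult_right_mono[of "d - x" d "\<bar>b\<bar>"]
    by (simp add: abs_mult)
  also have "\<dots> \<le> (1 * a\<^sup>2 + 1/1) / 2 + d * ((q * b\<^sup>2 + 1/q) / 2)"
    using abs_le_weighted_square[of 1 a] abs_le_weighted_square[OF q, of b] x
    by (intro add_mono mult_left_mono) auto
  also have "\<dots> = 1/2 * a\<^sup>2 + d * q / 2 * b\<^sup>2 + (1/2 + d / (2 * q))" using q by (simp add: field_simps)
  finally show ?thesis .
qed

lemma trace_inequality:
  assumes d: "0 < d" and q: "0 < q" and w: "ac_primitive d w w'"
    and w'2: "set_integrable lborel {0..d} (\<lambda>x. (w' x)\<^sup>2)"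
  shows "d * \<bar>w 0\<bar> \<le> ((LINT x:{0..d}|lborel. (w x)\<^sup>2) + d) / 2
                      + d * (q * (LINT x:{0..d}|lborel. (w' x)\<^sup>2) + d / q) / 2"
proof -
  define F where "F x = w x - (d - x) * w' x" for x
  define R where "R x = 1/2 * (w x)\<^sup>2 + d * q / 2 * (w' x)\<^sup>2 + (1/2 + d / (2 * q))" for x
  have contw: "continuous_on {0..d} w" by (rule ac_primitive_continuous[OF w])
  have "set_integrable lborel {0..d} (\<lambda>x. (d - x) * w' x)"
    by (intro set_integrable_continuous_mult continuous_intros ac_primitive_integrable[OF w])
  then have iF: "set_integrable lborel {0..d} F"
    unfolding F_def by (intro set_integral_diff(1) borel_integrable_atLeastAtMost'[OF contw])
  have ia: "set_integrable lborel {0..d} (\<lambda>x. 1/2 * (w x)\<^sup>2)"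
    by (rule borel_integrable_atLeastAtMost') (intro continuous_intros contw)
  have ib: "set_integrable lborel {0..d} (\<lambda>x. d * q / 2 * (w' x)\<^sup>2)"
    using w'2 by (rule set_integrable_mult_right)
  have ic: "set_integrable lborel {0..d} (\<lambda>x. 1/2 + d / (2 * q))"
    by (rule borel_integrable_atLeastAtMost'[OF continuous_on_const])
  have iR: "set_integrable lborel {0..d} R"
    unfolding R_def by (intro set_integral_add(1) ia ib ic)
  have FR: "\<bar>F x\<bar> \<le> R x" if "x \<in> {0..d}" for x
    unfolding F_def R_def using that q by (intro abs_trace_integrand_le) auto
  have "d * \<bar>w 0\<bar> = \<bar>d * w 0\<bar>" using d by (simp add: abs_mult)
  also have "\<dots> = \<bar>LINT x:{0..d}|lborel. F x\<bar>" unfolding F_def ac_primitive_value_at_0[OF d w] ..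
  also have "\<dots> \<le> (LINT x:{0..d}|lborel. \<bar>F x\<bar>)"
    using set_integral_norm_bound[OF iF] by simp
  also have "\<dots> \<le> (LINT x:{0..d}|lborel. R x)"
    using FR by (intro set_integral_mono set_integrable_abs iF iR)
  also have "\<dots> = 1/2 * (LINT x:{0..d}|lborel. (w x)\<^sup>2) + d * q / 2 * (LINT x:{0..d}|lborel. (w' x)\<^sup>2)
                  + d * (1/2 + d / (2 * q))"
  proof -
    have "(LINT x:{0..d}|lborel. 1/2 + d / (2 * q)) = d * (1/2 + d / (2 * q))"
      using d by (simp add: set_integral_const)
    then show ?thesis
      unfolding R_def set_integral_add(2)[OF set_integral_add(1)[OF ia ib] ic] set_integral_add(2)[OF ia ib]
        set_integral_mult_right by simp
  qed
  also have "\<dots> = ((LINT x:{0..d}|lborel. (w x)\<^sup>2) + d) / 2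
                  + d * (q * (LINT x:{0..d}|lborel. (w' x)\<^sup>2) + d / q) / 2"
    using q by (simp add: field_simps)
  finally show ?thesis .
qed

section \<open>The shooting solution\<close>

locale robin_setting =
  fixes B T :: real
  assumes T_pos: "0 < T" and BT_small: "\<bar>B\<bar> * T < 1/3"
begin

abbreviation rho :: "real \<Rightarrow> real" where "rho x \<equiv> 1 - B * x"

lemma rho_bounds:
  assumes "x \<in> {0..T}"
  shows "2/3 \<le> rho x" "rho x \<le> 4/3" "0 < rho x"
proof -
  have "\<bar>B * x\<bar> \<le> \<bar>B\<bar> * T" unfolding abs_mult by (rule mult_left_mono) (use assms in auto)
  then have "\<bar>B * x\<bar> < 1/3" using BT_small by linarith
  then show "2/3 \<le> rho x" "rho x \<le> 4/3" "0 < rho x" by (simp_all add: abs_less_iff)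
qed

lemma rho_ne_0: "x \<in> {0..T} \<Longrightarrow> rho x \<noteq> 0"
  using rho_bounds(3) by fastforce

text \<open>Picard iterates for \<open>V' = Q/\<rho>\<close>, \<open>Q' = m\<rho>V\<close>, \<open>V(T) = 0\<close>, \<open>Q(T) = -1\<close>, ordered by powers of \<open>m\<close>:
  \<open>V = \<Sum> m\<^sup>n sol_coeff n\<close> and \<open>Q = \<Sum> m\<^sup>n flux_coeff n\<close>, where \<open>Q = \<rho>V'\<close> is the flux.\<close>

primrec flux_coeff :: "nat \<Rightarrow> real \<Rightarrow> real" where
  "flux_coeff 0 x = -1"
| "flux_coeff (Suc n) x = - integral {x..T} (\<lambda>t. rho t * integral {t..T} (\<lambda>y. - flux_coeff n y / rho y))"

definition sol_coeff :: "nat \<Rightarrow> real \<Rightarrow> real" where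
  "sol_coeff n x = integral {x..T} (\<lambda>y. - flux_coeff n y / rho y)"

lemma flux_coeff_Suc_sol_coeff: "flux_coeff (Suc n) x = - integral {x..T} (\<lambda>t. rho t * sol_coeff n t)"
  by (simp add: sol_coeff_def)

lemma sol_coeff_invariants:
  assumes cont: "continuous_on {0..T} (flux_coeff n)"
    and nonpos: "\<And>x. x \<in> {0..T} \<Longrightarrow> flux_coeff n x \<le> 0"
    and bound: "\<And>x. x \<in> {0..T} \<Longrightarrow> \<bar>flux_coeff n x\<bar> \<le> 2^n * (T - x)^(2*n) / fact (2*n)"
  shows "continuous_on {0..T} (sol_coeff n) \<and> (\<forall>x\<in>{0..T}. 0 \<le> sol_coeff n x \<and>
           \<bar>sol_coeff n x\<bar> \<le> 3/2 * 2^n * (T - x)^(2*n+1) / fact (2*n+1))"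
proof -
  define f where "f y = - flux_coeff n y / rho y" for y
  have cf: "continuous_on {0..T} f" unfolding f_def
    by (intro continuous_intros cont) (use rho_ne_0 in blast)
  have bf: "\<bar>f t\<bar> \<le> (3/2 * 2^n) * (T-t)^(2*n) / fact (2*n)" if t: "t \<in> {0..T}" for t
  proof -
    have r: "2/3 \<le> rho t" "0 < rho t" using rho_bounds[OF t] by auto
    have "\<bar>f t\<bar> = \<bar>flux_coeff n t\<bar> / rho t" unfolding f_def using r by simp
    also have "\<dots> \<le> \<bar>flux_coeff n t\<bar> / (2/3)" by (rule divide_left_mono) (use r in auto)
    also have "\<dots> \<le> (2^n * (T - t)^(2*n) / fact (2*n)) / (2/3)"
      by (rule divide_right_mono) (use bound[OF t] in auto)
    finally show ?thesis by simp
  qed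
  have nf: "0 \<le> f t" if t: "t \<in> {0..T}" for t
    unfolding f_def by (rule divide_nonneg_pos) (use rho_bounds(3)[OF t] nonpos[OF t] in auto)
  have "sol_coeff n = (\<lambda>x. integral {x..T} f)" by (simp add: sol_coeff_def f_def[abs_def] fun_eq_iff)
  then show ?thesis
    using continuous_on_integral_upper[OF cf] integral_upper_abs_le_power[OF cf _ bf]
      integral_upper_nonneg[OF cf _ nf] by simp
qed

lemma coeff_invariants:
  "continuous_on {0..T} (flux_coeff n) \<and> continuous_on {0..T} (sol_coeff n) \<and>
   (\<forall>x\<in>{0..T}. flux_coeff n x \<le> 0 \<and> 0 \<le> sol_coeff n x \<and>
      \<bar>flux_coeff n x\<bar> \<le> 2^n * (T - x)^(2*n) / fact (2*n) \<and>
      \<bar>sol_coeff n x\<bar> \<le> 3/2 * 2^n * (T - x)^(2*n+1) / fact (2*n+1))"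
proof (induction n)
  case 0
  then show ?case using sol_coeff_invariants[of 0] by auto
next
  case (Suc n)
  then have cA: "continuous_on {0..T} (sol_coeff n)"
    and nA: "\<And>x. x \<in> {0..T} \<Longrightarrow> 0 \<le> sol_coeff n x"
    and bA: "\<And>x. x \<in> {0..T} \<Longrightarrow> \<bar>sol_coeff n x\<bar> \<le> 3/2 * 2^n * (T - x)^(2*n+1) / fact (2*n+1)"
    by blast+
  define g where "g t = rho t * sol_coeff n t" for t
  have cg: "continuous_on {0..T} g" unfolding g_def by (intro continuous_intros cA)
  have bg: "\<bar>g t\<bar> \<le> 2^(Suc n) * (T-t)^(2*n+1) / fact (2*n+1)" if t: "t \<in> {0..T}" for t
  proof -
    have "\<bar>g t\<bar> = rho t * \<bar>sol_coeff n t\<bar>" unfolding g_def using rho_bounds[OF t] by (simp add: abs_mult)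
    also have "\<dots> \<le> 4/3 * (3/2 * 2^n * (T - t)^(2*n+1) / fact (2*n+1))"
      by (rule mult_mono) (use rho_bounds[OF t] bA[OF t] in auto)
    finally show ?thesis by (simp add: mult_ac)
  qed
  have ng: "0 \<le> g t" if t: "t \<in> {0..T}" for t
    unfolding g_def using rho_bounds[OF t] nA[OF t] by simp
  have eq: "flux_coeff (Suc n) = (\<lambda>x. - integral {x..T} g)"
    unfolding g_def by (rule ext, rule flux_coeff_Suc_sol_coeff)
  have cP: "continuous_on {0..T} (flux_coeff (Suc n))"
    unfolding eq by (intro continuous_intros continuous_on_integral_upper cg)
  have nP: "flux_coeff (Suc n) x \<le> 0" if x: "x \<in> {0..T}" for x
    unfolding eq using integral_upper_nonneg[OF cg x ng] by simp
  have bP: "\<bar>flux_coeff (Suc n) x\<bar> \<le> 2^(Suc n) * (T - x)^(2 * Suc n) / fact (2 * Suc n)"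
    if x: "x \<in> {0..T}" for x
    unfolding eq using integral_upper_abs_le_power[OF cg x bg] by simp
  show ?case using sol_coeff_invariants[of "Suc n", OF cP nP bP] cP nP bP by auto
qed

lemma flux_coeff_bound:
  assumes "x \<in> {0..T}"
  shows "\<bar>flux_coeff n x\<bar> \<le> (2*T\<^sup>2)^n / fact n"
proof -
  have "\<bar>flux_coeff n x\<bar> \<le> 2^n * (T - x)^(2*n) / fact (2*n)" using coeff_invariants assms by blast
  also have "\<dots> \<le> 2^n * T^(2*n) / fact n" by (rule power_over_fact_mono) (use assms in auto)
  finally show ?thesis by (simp add: power_mult power_mult_distrib)
qed

lemma sol_coeff_bound:
  assumes "x \<in> {0..T}"
  shows "\<bar>sol_coeff n x\<bar> \<le> 2*T * (2*T\<^sup>2)^n / fact n"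
proof -
  have "\<bar>sol_coeff n x\<bar> \<le> 3/2 * 2^n * (T - x)^(2*n+1) / fact (2*n+1)"
    using coeff_invariants assms by blast
  also have "\<dots> \<le> 3/2 * 2^n * T^(2*n+1) / fact n" by (rule power_over_fact_mono) (use assms in auto)
  also have "\<dots> = 3/2 * T * (2*T\<^sup>2)^n / fact n" by (simp add: power_mult power_mult_distrib)
  also have "\<dots> \<le> 2*T * (2*T\<^sup>2)^n / fact n" by (rule divide_right_mono) (use T_pos in auto)
  finally show ?thesis .
qed

lemma rho_sol_coeff_bound:
  assumes x: "x \<in> {0..T}"
  shows "\<bar>rho x * sol_coeff n x\<bar> \<le> 1/T * ((2*T\<^sup>2)^(Suc n) / fact (Suc n))"
proof -
  have "\<bar>sol_coeff n x\<bar> \<le> 3/2 * 2^n * (T - x)^(2*n+1) / fact (2*n+1)"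
    using coeff_invariants x by blast
  also have "\<dots> \<le> 3/2 * 2^n * T^(2*n+1) / fact (Suc n)" by (rule power_over_fact_mono) (use x in auto)
  finally have s: "\<bar>sol_coeff n x\<bar> \<le> 3/2 * 2^n * T^(2*n+1) / fact (Suc n)" .
  have "\<bar>rho x * sol_coeff n x\<bar> \<le> 4/3 * (3/2 * 2^n * T^(2*n+1) / fact (Suc n))"
    unfolding abs_mult by (rule mult_mono) (use rho_bounds[OF x] s in auto)
  also have "\<dots> = 1/T * ((2*T\<^sup>2)^(Suc n) / fact (Suc n))"
  proof -
    have e1: "(2*T\<^sup>2)^(Suc n) = 2^(Suc n) * T^(2 * Suc n)"
      by (simp add: power_mult_distrib power_mult power2_eq_square)
    have e2: "T^(2 * Suc n) = T * T^(2*n+1)" by simp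
    have "4/3 * (3/2 * 2^n * T^(2*n+1)) = 1/T * (2*T\<^sup>2)^(Suc n)"
      unfolding e1 e2 using T_pos by simp
    then show ?thesis by simp
  qed
  finally show ?thesis .
qed

definition shoot_sol :: "real \<Rightarrow> real \<Rightarrow> real" where
  "shoot_sol m x = (\<Sum>n. m^n * sol_coeff n x)"

definition shoot_flux :: "real \<Rightarrow> real \<Rightarrow> real" where
  "shoot_flux m x = (\<Sum>n. m^n * flux_coeff n x)"

lemma summable_sol_series:
  assumes "x \<in> {0..T}"
  shows "summable (\<lambda>n. m^n * sol_coeff n x)"
proof (rule summable_comparison_test'[OF summable_mult_exp_series[of "2*T" "\<bar>m\<bar>*(2*T\<^sup>2)"]])
  fix n
  have "norm (m^n * sol_coeff n x) = \<bar>m\<bar>^n * \<bar>sol_coeff n x\<bar>" by (simp add: abs_mult power_abs)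
  also have "\<dots> \<le> \<bar>m\<bar>^n * (2*T * (2*T\<^sup>2)^n / fact n)"
    by (rule mult_left_mono[OF sol_coeff_bound[OF assms]]) simp
  also have "\<dots> = 2*T * ((\<bar>m\<bar>*(2*T\<^sup>2))^n / fact n)" by (simp add: power_mult_distrib)
  finally show "norm (m^n * sol_coeff n x) \<le> 2*T * ((\<bar>m\<bar>*(2*T\<^sup>2))^n / fact n)" .
qed

lemma summable_flux_series:
  assumes "x \<in> {0..T}"
  shows "summable (\<lambda>n. m^n * flux_coeff n x)"
proof (rule summable_comparison_test'[OF summable_mult_exp_series[of 1 "\<bar>m\<bar>*(2*T\<^sup>2)"]])
  fix n
  have "\<bar>m\<bar>^n * \<bar>flux_coeff n x\<bar> \<le> \<bar>m\<bar>^n * ((2*T\<^sup>2)^n / fact n)"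
    by (rule mult_left_mono[OF flux_coeff_bound[OF assms]]) simp
  then show "norm (m^n * flux_coeff n x) \<le> 1 * ((\<bar>m\<bar>*(2*T\<^sup>2))^n / fact n)"
    by (simp add: abs_mult power_abs power_mult_distrib)
qed

lemma sol_coeff_deriv:
  assumes x: "x \<in> {0..T}"
  shows "(sol_coeff n has_real_derivative flux_coeff n x / rho x) (at x within {0..T})"
proof -
  have "continuous_on {0..T} (\<lambda>y. - flux_coeff n y / rho y)"
    by (intro continuous_intros conjunct1[OF coeff_invariants]) (use rho_ne_0 in blast)
  from has_real_derivative_integral_upper[OF this x] show ?thesis
    by (simp add: sol_coeff_def[abs_def])
qed

lemma flux_coeff_Suc_deriv:
  assumes x: "x \<in> {0..T}"
  shows "(flux_coeff (Suc n) has_real_derivative rho x * sol_coeff n x) (at x within {0..T})"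
proof -
  have "continuous_on {0..T} (\<lambda>t. rho t * sol_coeff n t)"
    by (intro continuous_intros conjunct1[OF conjunct2[OF coeff_invariants]])
  from DERIV_minus[OF has_real_derivative_integral_upper[OF this x]] show ?thesis
    by (simp add: flux_coeff_Suc_sol_coeff[abs_def])
qed

lemma shoot_sol_deriv:
  assumes x: "x \<in> {0..T}"
  shows "(shoot_sol m has_real_derivative shoot_flux m x / rho x) (at x within {0..T})"
proof -
  have "((\<lambda>x. \<Sum>n. m^n * sol_coeff n x) has_real_derivative (\<Sum>n. m^n * (flux_coeff n x / rho x)))
      (at x within {0..T})"
  proof (rule has_real_derivative_suminf[OF _ _ _ summable_mult_exp_series summable_sol_series x])
    fix n y assume y: "y \<in> {0..T}"
    show "((\<lambda>x. m^n * sol_coeff n x) has_real_derivative m^n * (flux_coeff n y / rho y)) (at y within {0..T})"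
      by (intro DERIV_cmult sol_coeff_deriv y)
    have r: "2/3 \<le> rho y" "0 < rho y" using rho_bounds[OF y] by auto
    have "\<bar>m^n * (flux_coeff n y / rho y)\<bar> = \<bar>m\<bar>^n * (\<bar>flux_coeff n y\<bar> / rho y)"
      using r by (simp add: abs_mult power_abs)
    also have "\<dots> \<le> \<bar>m\<bar>^n * (((2*T\<^sup>2)^n / fact n) / (2/3))"
      by (intro mult_left_mono frac_le flux_coeff_bound y) (use r in auto)
    finally show "\<bar>m^n * (flux_coeff n y / rho y)\<bar> \<le> 3/2 * ((\<bar>m\<bar>*(2*T\<^sup>2))^n / fact n)"
      by (simp add: power_mult_distrib)
  qed simp
  moreover have "(\<Sum>n. m^n * (flux_coeff n x / rho x)) = shoot_flux m x / rho x"
    unfolding shoot_flux_def using suminf_divide[OF summable_flux_series[OF x, of m], of "rho x"] by simp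
  ultimately show ?thesis by (simp add: shoot_sol_def[abs_def])
qed

lemma shoot_flux_deriv:
  assumes x: "x \<in> {0..T}"
  shows "(shoot_flux m has_real_derivative m * rho x * shoot_sol m x) (at x within {0..T})"
proof -
  define f' where "f' n y = (case n of 0 \<Rightarrow> 0 | Suc k \<Rightarrow> m^(Suc k) * (rho y * sol_coeff k y))" for n y
  have "((\<lambda>x. \<Sum>n. m^n * flux_coeff n x) has_real_derivative (\<Sum>n. f' n x)) (at x within {0..T})"
  proof (rule has_real_derivative_suminf[OF _ _ _ summable_mult_exp_series summable_flux_series x])
    fix n y assume y: "y \<in> {0..T}"
    show "((\<lambda>x. m^n * flux_coeff n x) has_real_derivative f' n y) (at y within {0..T})"
    proof (cases n)
      case (Suc k)
      have "((\<lambda>x. m^Suc k * flux_coeff (Suc k) x) has_real_derivative m^Suc k * (rho y * sol_coeff k y))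
          (at y within {0..T})"
        by (rule DERIV_cmult[OF flux_coeff_Suc_deriv[OF y]])
      then show ?thesis unfolding Suc f'_def by (simp only: nat.case)
    qed (simp add: f'_def)
    show "\<bar>f' n y\<bar> \<le> 1/T * ((\<bar>m\<bar>*(2*T\<^sup>2))^n / fact n)"
    proof (cases n)
      case (Suc k)
      have "\<bar>f' n y\<bar> = \<bar>m\<bar>^(Suc k) * \<bar>rho y * sol_coeff k y\<bar>"
        unfolding Suc f'_def by (simp add: abs_mult power_abs)
      also have "\<dots> \<le> \<bar>m\<bar>^(Suc k) * (1/T * ((2*T\<^sup>2)^(Suc k) / fact (Suc k)))"
        by (rule mult_left_mono[OF rho_sol_coeff_bound[OF y]]) simp
      also have "\<dots> = 1/T * ((\<bar>m\<bar>*(2*T\<^sup>2))^n / fact n)" unfolding Suc by (simp add: power_mult_distrib)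
      finally show ?thesis .
    qed (use T_pos in \<open>simp add: f'_def\<close>)
  qed simp
  moreover have "(\<Sum>n. f' n x) = m * rho x * shoot_sol m x"
  proof -
    have "(\<lambda>n. (m * rho x) * (m^n * sol_coeff n x)) sums ((m * rho x) * shoot_sol m x)"
      unfolding shoot_sol_def by (intro sums_mult summable_sums summable_sol_series x)
    then have "(\<lambda>n. f' (Suc n) x) sums (m * rho x * shoot_sol m x)" by (simp add: f'_def mult_ac)
    then show ?thesis by (subst (asm) sums_Suc_iff) (simp add: f'_def sums_iff)
  qed
  ultimately show ?thesis by (simp add: shoot_flux_def[abs_def])
qed

lemma shoot_sol_continuous: "continuous_on {0..T} (shoot_sol m)"
  using shoot_sol_deriv by (meson DERIV_continuous continuous_on_eq_continuous_within)

lemma shoot_flux_continuous: "continuous_on {0..T} (shoot_flux m)"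
  using shoot_flux_deriv by (meson DERIV_continuous continuous_on_eq_continuous_within)

lemma shoot_sol_at_T: "shoot_sol m T = 0"
  by (simp add: shoot_sol_def sol_coeff_def)

lemma shoot_flux_le:
  assumes "0 \<le> m" "x \<in> {0..T}"
  shows "shoot_flux m x \<le> -1"
proof -
  have "shoot_flux m x \<le> (\<Sum>n. if n = 0 then -1 else 0)"
    unfolding shoot_flux_def
  proof (rule suminf_le)
    show "m^n * flux_coeff n x \<le> (if n = 0 then -1 else 0)" for n
      using coeff_invariants assms by (auto intro!: mult_nonneg_nonpos)
  qed (use summable_flux_series[OF assms(2)] in auto)
  also have "(\<Sum>n. if n = 0 then -1 else 0::real) = -1"
    using sums_single[of 0 "\<lambda>_. -1::real"] by (simp add: sums_iff)
  finally show ?thesis .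
qed

lemma sol_coeff_0_le_shoot_sol:
  assumes "0 \<le> m" "x \<in> {0..T}"
  shows "sol_coeff 0 x \<le> shoot_sol m x"
proof -
  have "(\<Sum>n. if n = 0 then sol_coeff 0 x else 0) \<le> shoot_sol m x"
    unfolding shoot_sol_def
  proof (rule suminf_le)
    show "(if n = 0 then sol_coeff 0 x else 0) \<le> m^n * sol_coeff n x" for n
      using coeff_invariants assms by auto
  qed (use summable_sol_series[OF assms(2)] in auto)
  then show ?thesis using sums_single[of 0 "\<lambda>_. sol_coeff 0 x"] by (simp add: sums_iff)
qed

lemma shoot_sol_nonneg: "0 \<le> m \<Longrightarrow> x \<in> {0..T} \<Longrightarrow> 0 \<le> shoot_sol m x"
  using sol_coeff_0_le_shoot_sol coeff_invariants by (meson order_trans)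

lemma isCont_robin_mismatch: "isCont (\<lambda>m. shoot_flux m 0 + shoot_sol m 0) m"
proof -
  have z: "(0::real) \<in> {0..T}" using T_pos by auto
  have eq: "(\<lambda>m. shoot_flux m 0 + shoot_sol m 0) = (\<lambda>m. \<Sum>n. (flux_coeff n 0 + sol_coeff n 0) * m^n)"
    unfolding shoot_flux_def shoot_sol_def
    using suminf_add[OF summable_flux_series[OF z] summable_sol_series[OF z]]
    by (simp add: algebra_simps)
  have "summable (\<lambda>n. (flux_coeff n 0 + sol_coeff n 0) * y^n)" for y :: real
  proof (rule summable_comparison_test'[OF summable_mult_exp_series[of "1 + 2*T" "\<bar>y\<bar>*(2*T\<^sup>2)"]])
    fix n
    have "norm ((flux_coeff n 0 + sol_coeff n 0) * y^n) \<le> (\<bar>flux_coeff n 0\<bar> + \<bar>sol_coeff n 0\<bar>) * \<bar>y\<bar>^n"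
      by (simp add: abs_mult power_abs mult_right_mono)
    also have "\<dots> \<le> ((2*T\<^sup>2)^n / fact n + 2*T * (2*T\<^sup>2)^n / fact n) * \<bar>y\<bar>^n"
      by (intro mult_right_mono add_mono flux_coeff_bound sol_coeff_bound z) simp
    finally show "norm ((flux_coeff n 0 + sol_coeff n 0) * y^n) \<le> (1 + 2*T) * ((\<bar>y\<bar>*(2*T\<^sup>2))^n / fact n)"
      by (simp add: power_mult_distrib field_simps)
  qed
  then show ?thesis unfolding eq by (rule isCont_powser_converges_everywhere)
qed

definition riccati :: "real \<Rightarrow> real \<Rightarrow> real" where
  "riccati m x = shoot_sol m x / - shoot_flux m x"

lemma riccati_deriv:
  assumes m: "0 \<le> m" and x: "x \<in> {0..T}"
  shows "(riccati m has_real_derivative m * rho x * (riccati m x)\<^sup>2 - 1 / rho x) (at x within {0..T})"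
proof -
  have q: "shoot_flux m x \<le> -1" by (rule shoot_flux_le[OF m x])
  have "(riccati m has_real_derivative
          ((shoot_flux m x / rho x) * - shoot_flux m x - shoot_sol m x * - (m * rho x * shoot_sol m x))
          / (- shoot_flux m x * - shoot_flux m x)) (at x within {0..T})"
    unfolding riccati_def[abs_def]
    by (intro DERIV_divide DERIV_minus shoot_sol_deriv shoot_flux_deriv x) (use q in auto)
  moreover have "((shoot_flux m x / rho x) * - shoot_flux m x - shoot_sol m x * - (m * rho x * shoot_sol m x))
          / (- shoot_flux m x * - shoot_flux m x) = m * rho x * (riccati m x)\<^sup>2 - 1 / rho x"
    using q rho_ne_0[OF x] unfolding riccati_def by (simp add: field_simps power2_eq_square)
  ultimately show ?thesis by simp
qed

lemma riccati_at_T: "riccati m T = 0"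
  by (simp add: riccati_def shoot_sol_at_T)

lemma riccati_nonneg:
  assumes "0 \<le> m" "x \<in> {0..T}"
  shows "0 \<le> riccati m x"
  unfolding riccati_def
  by (rule divide_nonneg_pos) (use shoot_sol_nonneg[OF assms] shoot_flux_le[OF assms] in auto)

lemma riccati_le_1_iff:
  assumes "0 \<le> m"
  shows "riccati m 0 \<le> 1 \<longleftrightarrow> shoot_flux m 0 + shoot_sol m 0 \<le> 0"
  unfolding riccati_def using shoot_flux_le[OF assms, of 0] T_pos by (subst pos_divide_le_eq) auto

lemma riccati_ge_1_iff:
  assumes "0 \<le> m"
  shows "1 \<le> riccati m 0 \<longleftrightarrow> 0 \<le> shoot_flux m 0 + shoot_sol m 0"
  unfolding riccati_def using shoot_flux_le[OF assms, of 0] T_pos by (subst pos_le_divide_eq) auto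

lemma riccati_4_le_1: "riccati 4 0 \<le> 1"
proof -
  have D: "((\<lambda>x. riccati 4 x - 1) has_real_derivative 4 * rho x * (riccati 4 x)\<^sup>2 - 1 / rho x)
      (at x within {0..T})" if "x \<in> {0..T}" for x
    using DERIV_diff[OF riccati_deriv[OF _ that] DERIV_const, of 4 1] by simp
  have "0 < 4 * rho x * (riccati 4 x)\<^sup>2 - 1 / rho x" if x: "x \<in> {0..T}" and "riccati 4 x - 1 = 0" for x
  proof -
    have "1 / rho x \<le> 3/2" using rho_bounds[OF x] by (simp add: divide_simps)
    then show ?thesis using rho_bounds[OF x] \<open>riccati 4 x - 1 = 0\<close> by simp
  qed
  from nonpos_if_deriv_pos_at_zeros[OF D _ this, of 0] show ?thesis
    using T_pos riccati_at_T by simp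
qed

lemma riccati_quarter_ge_1:
  assumes T3: "3 \<le> T"
  shows "1 \<le> riccati (1/4) 0"
proof (rule ccontr)
  assume "\<not> 1 \<le> riccati (1/4) 0"
  define r where "r = riccati (1/4)"
  define r' where "r' x = 1/4 * rho x * (r x)\<^sup>2 - 1 / rho x" for x
  have D: "(r has_real_derivative r' x) (at x within {0..T})" if "x \<in> {0..T}" for x
    unfolding r_def r'_def by (rule riccati_deriv) (use that in auto)
  have inv_rho: "3/4 \<le> 1 / rho x" if "x \<in> {0..T}" for x
    using rho_bounds[OF that] by (simp add: divide_simps)
  have le1: "r x - 1 \<le> 0" if x: "x \<in> {0..T}" for x
  proof (rule nonpos_if_deriv_neg_at_zeros[OF _ _ _ x])
    show "((\<lambda>x. r x - 1) has_real_derivative r' x) (at x within {0..T})" if "x \<in> {0..T}" for x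
      using DERIV_diff[OF D[OF that] DERIV_const] by simp
    show "r' x < 0" if "x \<in> {0..T}" "r x - 1 = 0" for x
      using rho_bounds[OF that(1)] inv_rho[OF that(1)] that(2) unfolding r'_def by simp
  qed (use \<open>\<not> 1 \<le> riccati (1/4) 0\<close> in \<open>simp add: r_def\<close>)
  have "r' x \<le> -5/12" if x: "x \<in> {0..T}" for x
  proof -
    have "(r x)\<^sup>2 \<le> 1" using riccati_nonneg[of "1/4" x] le1[OF x] x
      by (simp add: r_def power_le_one)
    then have "rho x * (r x)\<^sup>2 \<le> 4/3" using rho_bounds[OF x] mult_mono[of "rho x" "4/3" "(r x)\<^sup>2" 1] by simp
    then show ?thesis using inv_rho[OF x] unfolding r'_def by simp
  qed
  then have "r T - r 0 \<le> -5/12 * (T - 0)" using T_pos by (intro diff_le_if_deriv_le[OF _ D]) auto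
  then show False using \<open>\<not> 1 \<le> riccati (1/4) 0\<close> riccati_at_T T3 unfolding r_def by simp
qed

lemma exists_robin_shooting_param:
  assumes "3 \<le> T"
  shows "\<exists>m. 1/4 \<le> m \<and> m \<le> 4 \<and> shoot_flux m 0 + shoot_sol m 0 = 0"
  using IVT2[of "\<lambda>m. shoot_flux m 0 + shoot_sol m 0" 4 0 "1/4"] isCont_robin_mismatch
    riccati_4_le_1 riccati_quarter_ge_1[OF assms] riccati_le_1_iff[of 4] riccati_ge_1_iff[of "1/4"]
  by auto

lemma shoot_sol_form_dom: "form_dom T (shoot_sol m) (\<lambda>x. shoot_flux m x / rho x)"
proof -
  have cont: "continuous_on {0..T} (\<lambda>x. shoot_flux m x / rho x)"
    by (intro continuous_intros shoot_flux_continuous) (use rho_ne_0 in blast)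
  have "ac_primitive T (shoot_sol m) (\<lambda>x. shoot_flux m x / rho x)"
    unfolding ac_primitive_def
  proof (intro conjI ballI)
    show "set_integrable lborel {0..T} (\<lambda>x. shoot_flux m x / rho x)"
      by (rule borel_integrable_atLeastAtMost'[OF cont])
    fix x assume x: "x \<in> {0..T}"
    have "(LINT t:{0..x}|lborel. shoot_flux m t / rho t) = shoot_sol m x - shoot_sol m 0"
      by (rule set_integral_FTC[of 0 x "{0..T}"])
         (use x shoot_sol_deriv in \<open>auto intro: continuous_on_subset[OF cont]\<close>)
    then show "shoot_sol m x = shoot_sol m 0 + (LBINT t=0..x. shoot_flux m t / rho t)"
      using x by (simp add: interval_integral_Icc0)
  qed
  moreover have "set_integrable lborel {0..T} (\<lambda>x. (shoot_flux m x / rho x)\<^sup>2)"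
    by (rule borel_integrable_atLeastAtMost') (intro continuous_intros cont)
  ultimately show ?thesis using shoot_sol_at_T by (simp add: form_dom_iff)
qed

lemma sol_coeff_0_lower:
  assumes x: "x \<in> {0..T}"
  shows "3/4 * (T - x) \<le> sol_coeff 0 x"
proof -
  have "integral {x..T} (\<lambda>y. 3/4) \<le> integral {x..T} (\<lambda>y. - flux_coeff 0 y / rho y)"
  proof (rule integral_le)
    show "(\<lambda>y. - flux_coeff 0 y / rho y) integrable_on {x..T}"
      by (intro integrable_continuous_interval continuous_intros) (use x rho_ne_0 in auto)
    show "3/4 \<le> - flux_coeff 0 y / rho y" if "y \<in> {x..T}" for y
      using rho_bounds[of y] that x by (simp add: divide_simps)
  qed (rule integrable_const_ivl)
  then show ?thesis using x by (simp add: sol_coeff_def)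
qed

lemma shoot_sol_weighted_norm_pos:
  assumes m: "0 \<le> m"
  shows "0 < (LBINT x=0..T. (shoot_sol m x)\<^sup>2 * rho x)"
proof -
  have T0: "0 \<le> T" using T_pos by simp
  have "(LINT x:{0..T}|lborel. 3/8 * (T - x)\<^sup>2) \<le> (LINT x:{0..T}|lborel. (shoot_sol m x)\<^sup>2 * rho x)"
  proof (rule set_integral_mono)
    show "set_integrable lborel {0..T} (\<lambda>x. 3/8 * (T - x)\<^sup>2)"
      by (rule borel_integrable_atLeastAtMost') (intro continuous_intros)
    show "set_integrable lborel {0..T} (\<lambda>x. (shoot_sol m x)\<^sup>2 * rho x)"
      by (rule borel_integrable_atLeastAtMost') (intro continuous_intros shoot_sol_continuous)
    fix x assume x: "x \<in> {0..T}"
    have "3/4 * (T - x) \<le> shoot_sol m x"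
      using sol_coeff_0_lower[OF x] sol_coeff_0_le_shoot_sol[OF m x] by linarith
    then have "(3/4 * (T - x))\<^sup>2 \<le> (shoot_sol m x)\<^sup>2" by (rule power_mono) (use x in auto)
    then have "(3/4 * (T - x))\<^sup>2 * (2/3) \<le> (shoot_sol m x)\<^sup>2 * rho x"
      by (rule mult_mono) (use rho_bounds[OF x] in auto)
    moreover have "(3/4 * (T - x))\<^sup>2 * (2/3) = 3/8 * (T - x)\<^sup>2" unfolding power_mult_distrib by (simp add: power2_eq_square)
    ultimately show "3/8 * (T - x)\<^sup>2 \<le> (shoot_sol m x)\<^sup>2 * rho x" by simp
  qed
  moreover have "(LINT x:{0..T}|lborel. 3/8 * (T - x)\<^sup>2) = T^3 / 8"
  proof -
    define P :: "real \<Rightarrow> real" where "P z = - ((T - z)^3) / 8" for z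
    have "(LINT x:{0..T}|lborel. 3/8 * (T - x)\<^sup>2) = P T - P 0"
      unfolding P_def by (rule set_integral_FTC[of 0 T UNIV])
         (use T0 in \<open>auto intro!: derivative_eq_intros continuous_intros simp: power2_eq_square\<close>)
    then show ?thesis by (simp add: P_def)
  qed
  ultimately have "T^3 / 8 \<le> (LINT x:{0..T}|lborel. (shoot_sol m x)\<^sup>2 * rho x)" by simp
  moreover have "0 < T^3 / 8" using T_pos by simp
  ultimately show ?thesis unfolding interval_integral_Icc0[OF T0] by linarith
qed

lemma shoot_sol_eigen_equation:
  assumes robin: "shoot_flux m 0 + shoot_sol m 0 = 0" and w: "form_dom T w w'"
  shows "(LBINT x=0..T. shoot_flux m x / rho x * w' x * rho x) - shoot_sol m 0 * w 0
       = - m * (LBINT x=0..T. shoot_sol m x * w x * rho x)"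
proof -
  have T0: "0 \<le> T" using T_pos by simp
  have wa: "ac_primitive T w w'" and wT: "w T = 0" using w by (auto simp: form_dom_iff)
  have "(LBINT x=0..T. shoot_flux m x * w' x)
      = shoot_flux m T * w T - shoot_flux m 0 * w 0 - (LBINT x=0..T. m * rho x * shoot_sol m x * w x)"
    by (rule ac_primitive_integration_by_parts[OF T0 shoot_flux_deriv _ wa])
       (auto intro!: continuous_intros shoot_sol_continuous)
  moreover have "(LBINT x=0..T. shoot_flux m x / rho x * w' x * rho x) = (LBINT x=0..T. shoot_flux m x * w' x)"
    unfolding interval_integral_Icc0[OF T0] by (rule set_lebesgue_integral_cong) (use rho_ne_0 in auto)
  moreover have "(LBINT x=0..T. m * rho x * shoot_sol m x * w x) = m * (LBINT x=0..T. shoot_sol m x * w x * rho x)"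
    unfolding interval_integral_Icc0[OF T0] set_integral_mult_right[symmetric]
    by (rule set_lebesgue_integral_cong) (auto simp: algebra_simps)
  moreover have "shoot_flux m 0 = - shoot_sol m 0" using robin by simp
  ultimately show ?thesis using wT by (simp add: algebra_simps)
qed

lemma exists_eigenpair_le_neg_quarter:
  assumes "3 \<le> T"
  shows "\<exists>mu v. mu \<le> -1/4 \<and> is_eigenpair B T mu v"
proof -
  obtain m where m: "1/4 \<le> m" "shoot_flux m 0 + shoot_sol m 0 = 0"
    using exists_robin_shooting_param[OF assms] by blast
  have "is_eigenpair B T (-m) (shoot_sol m)"
    unfolding is_eigenpair_def
    using shoot_sol_form_dom shoot_sol_weighted_norm_pos[of m] shoot_sol_eigen_equation[OF m(2)] m(1)
    by (intro exI[of _ "\<lambda>x. shoot_flux m x / rho x"]) force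
  then show ?thesis using m(1) by (intro exI[of _ "-m"] exI[of _ "shoot_sol m"]) auto
qed

section \<open>Decay of the ground state\<close>

lemma square_integral_le_weighted:
  fixes f :: "real \<Rightarrow> real"
  assumes f2: "set_integrable lborel {0..T} (\<lambda>x. (f x)\<^sup>2)" and d: "d \<le> T"
  shows "(LINT x:{0..d}|lborel. (f x)\<^sup>2) \<le> 3/2 * (LBINT x=0..T. (f x)\<^sup>2 * rho x)"
proof -
  have "(LINT x:{0..d}|lborel. (f x)\<^sup>2) \<le> (LINT x:{0..T}|lborel. (f x)\<^sup>2)"
    by (rule set_integral_mono_set[OF f2]) (use d in auto)
  also have "\<dots> \<le> (LINT x:{0..T}|lborel. 3/2 * rho x * (f x)\<^sup>2)"
  proof (rule set_integral_mono[OF f2])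
    show "set_integrable lborel {0..T} (\<lambda>x. 3/2 * rho x * (f x)\<^sup>2)"
      by (intro set_integrable_continuous_mult continuous_intros f2)
    show "(f x)\<^sup>2 \<le> 3/2 * rho x * (f x)\<^sup>2" if "x \<in> {0..T}" for x
      using mult_right_mono[OF rho_bounds(1)[OF that], of "(f x)\<^sup>2"] by (simp add: algebra_simps)
  qed
  also have "\<dots> = (LINT x:{0..T}|lborel. 3/2 * ((f x)\<^sup>2 * rho x))"
    by (rule set_lebesgue_integral_cong) auto
  also have "\<dots> = 3/2 * (LBINT x=0..T. (f x)\<^sup>2 * rho x)"
    using T_pos by (simp add: interval_integral_Icc0)
  finally show ?thesis .
qed

lemma robin_value_bound:
  assumes T: "1/6 \<le> T" and u: "form_dom T u u'"
    and norm: "(LBINT x=0..T. (u x)\<^sup>2 * rho x) = 1"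
    and energy: "(LBINT x=0..T. u' x * u' x * rho x) \<le> (u 0)\<^sup>2"
  shows "\<bar>u 0\<bar> \<le> 10"
proof (cases "u 0 = 0")
  case False
  define d :: real where "d = 1/6"
  define q where "q = 1 / (3 * \<bar>u 0\<bar>)"
  have ac: "ac_primitive T u u'" and u'2: "set_integrable lborel {0..T} (\<lambda>x. (u' x)\<^sup>2)"
    using u by (auto simp: form_dom_iff)
  have "set_integrable lborel {0..T} (\<lambda>x. (u x)\<^sup>2)"
    by (rule borel_integrable_atLeastAtMost') (intro continuous_intros ac_primitive_continuous[OF ac])
  from square_integral_le_weighted[OF this, of d] have A: "(LINT x:{0..d}|lborel. (u x)\<^sup>2) \<le> 3/2"
    using T norm unfolding d_def by simp
  have D: "(LINT x:{0..d}|lborel. (u' x)\<^sup>2) \<le> 3/2 * (u 0)\<^sup>2"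
    using square_integral_le_weighted[OF u'2, of d] T energy unfolding d_def by (simp add: power2_eq_square)
  have trace: "d * \<bar>u 0\<bar> \<le> ((LINT x:{0..d}|lborel. (u x)\<^sup>2) + d) / 2
                     + d * (q * (LINT x:{0..d}|lborel. (u' x)\<^sup>2) + d / q) / 2"
    by (rule trace_inequality[OF _ _ ac_primitive_subinterval[OF ac] set_integrable_subset[OF u'2]])
       (use T False in \<open>auto simp: d_def q_def\<close>)
  have Y: "q * (LINT x:{0..d}|lborel. (u' x)\<^sup>2) \<le> \<bar>u 0\<bar> / 2"
  proof -
    have "q * (LINT x:{0..d}|lborel. (u' x)\<^sup>2) \<le> q * (3/2 * (u 0)\<^sup>2)"
      by (rule mult_left_mono[OF D]) (simp add: q_def)
    also have "\<dots> = \<bar>u 0\<bar> / 2" using False by (simp add: q_def power2_eq_square field_simps)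
    finally show ?thesis .
  qed
  have Z: "d / q = \<bar>u 0\<bar> / 2" by (simp add: d_def q_def)
  have arith: "a \<le> 10" if "d * a \<le> (A + d) / 2 + d * (Y + Z) / 2" "A \<le> 3/2" "Y \<le> a/2" "Z = a/2"
    for a A Y Z :: real
    using that by (simp add: d_def field_simps)
  show ?thesis by (rule arith[OF trace A Y Z])
qed simp

lemma exp_test_energy_lower_bound:
  assumes u: "form_dom T u u'"
  shows "- 1/16 * (LINT x:{0..T}|lborel. exp (x/2) * rho x * (u x)\<^sup>2)
    \<le> (LBINT x=0..T. u' x * (exp (x/2) / 2 * u x + exp (x/2) * u' x) * rho x)"
proof -
  have T0: "0 \<le> T" using T_pos by simp
  have ac: "ac_primitive T u u'" and u'2: "set_integrable lborel {0..T} (\<lambda>x. (u' x)\<^sup>2)"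
    using u by (auto simp: form_dom_iff)
  have contu: "continuous_on {0..T} u" by (rule ac_primitive_continuous[OF ac])
  have i1: "set_integrable lborel {0..T} (\<lambda>x. exp (x/2) * rho x * (u x)\<^sup>2)"
    by (rule borel_integrable_atLeastAtMost') (auto intro!: continuous_intros contu)
  have "set_integrable lborel {0..T} (\<lambda>x. (exp (x/2) * rho x / 2 * u x) * u' x + exp (x/2) * rho x * (u' x)\<^sup>2)"
    using ac_primitive_integrable[OF ac] u'2
    by (intro set_integral_add(1) set_integrable_continuous_mult continuous_intros contu) auto
  then have i2: "set_integrable lborel {0..T} (\<lambda>x. u' x * (exp (x/2) / 2 * u x + exp (x/2) * u' x) * rho x)"
    by (simp add: power2_eq_square algebra_simps)
  have "(LINT x:{0..T}|lborel. - 1/16 * (exp (x/2) * rho x * (u x)\<^sup>2))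
      \<le> (LINT x:{0..T}|lborel. u' x * (exp (x/2) / 2 * u x + exp (x/2) * u' x) * rho x)"
  proof (rule set_integral_mono[OF _ i2])
    show "set_integrable lborel {0..T} (\<lambda>x. - 1/16 * (exp (x/2) * rho x * (u x)\<^sup>2))"
      by (rule set_integrable_mult_right[OF i1])
    fix x assume x: "x \<in> {0..T}"
    have "u' x * (exp (x/2) / 2 * u x + exp (x/2) * u' x) * rho x
        = exp (x/2) * rho x * (u' x + u x / 4)\<^sup>2 - 1/16 * (exp (x/2) * rho x * (u x)\<^sup>2)"
      by (simp add: power2_eq_square field_simps)
    moreover have "0 \<le> exp (x/2) * rho x * (u' x + u x / 4)\<^sup>2" using rho_bounds(3)[OF x] by simp
    ultimately show "- 1/16 * (exp (x/2) * rho x * (u x)\<^sup>2)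
        \<le> u' x * (exp (x/2) / 2 * u x + exp (x/2) * u' x) * rho x"
      by linarith
  qed
  then show ?thesis unfolding interval_integral_Icc0[OF T0] by (simp only: set_integral_mult_right)
qed

text \<open>Agmon-type estimate: the eigenvalue equation tested with \<open>exp(x/2) u\<close>, combined with the
  lower bound above, gives \<open>(-\<lambda> - 1/16) \<integral> exp(x/2) \<rho> u\<^sup>2 \<le> u(0)\<^sup>2\<close>.\<close>

lemma exp_weighted_norm_bound:
  assumes T: "1/6 \<le> T" and u: "form_dom T u u'"
    and eigen: "\<And>v v'. form_dom T v v' \<Longrightarrow>
      (LBINT x=0..T. u' x * v' x * rho x) - u 0 * v 0 = lam * (LBINT x=0..T. u x * v x * rho x)"
    and lam: "lam \<le> -1/4" and norm: "(LBINT x=0..T. (u x)\<^sup>2 * rho x) = 1"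
  shows "(LINT x:{0..T}|lborel. exp (x/2) * rho x * (u x)\<^sup>2) \<le> 1600/3"
proof -
  define I where "I = (LINT x:{0..T}|lborel. exp (x/2) * rho x * (u x)\<^sup>2)"
  have T0: "0 \<le> T" using T by simp
  have "(LBINT x=0..T. u' x * u' x * rho x) - u 0 * u 0 = lam"
    using eigen[OF u] norm by (simp add: power2_eq_square)
  then have "\<bar>u 0\<bar> \<le> 10" using lam by (intro robin_value_bound[OF T u norm]) (simp add: power2_eq_square)
  then have u0: "(u 0)\<^sup>2 \<le> 100" using power_mono[of "\<bar>u 0\<bar>" 10 2] by simp
  have v: "form_dom T (\<lambda>x. exp (x/2) * u x) (\<lambda>x. exp (x/2) / 2 * u x + exp (x/2) * u' x)"
    by (rule form_dom_mult[OF u]) (auto intro!: derivative_eq_intros continuous_intros)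
  have eq: "(LBINT x=0..T. u' x * (exp (x/2) / 2 * u x + exp (x/2) * u' x) * rho x)
      - (u 0)\<^sup>2 = lam * I"
  proof -
    have "(LBINT x=0..T. u x * (exp (x/2) * u x) * rho x) = I"
      unfolding I_def interval_integral_Icc0[OF T0]
      by (rule set_lebesgue_integral_cong) (auto simp: power2_eq_square)
    then show ?thesis using eigen[OF v] by (simp add: power2_eq_square)
  qed
  have "- 1/16 * I \<le> (LBINT x=0..T. u' x * (exp (x/2) / 2 * u x + exp (x/2) * u' x) * rho x)"
    unfolding I_def by (rule exp_test_energy_lower_bound[OF u])
  moreover have "lam * I \<le> -1/4 * I"
  proof (rule mult_right_mono[OF lam])
    show "0 \<le> I" unfolding I_def
      by (rule set_integral_nonneg, intro mult_nonneg_nonneg) (use rho_bounds(3) in \<open>auto intro: less_imp_le\<close>)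
  qed
  ultimately have "I \<le> 1600/3" using eq u0 by linarith
  then show ?thesis by (simp add: I_def)
qed

lemma ground_state_exp_decay:
  assumes T: "3 \<le> T" and G: "is_normalized_ground_state B T lam u"
  shows "sqrt (LBINT x=0..T. (exp (1/4 * x) * sqrt (1 - B * x) * u x)\<^sup>2) \<le> 24"
proof -
  have T0: "0 \<le> T" using T by simp
  obtain u' where u: "form_dom T u u'" and eigen: "\<And>v v'. form_dom T v v' \<Longrightarrow>
      (LBINT x=0..T. u' x * v' x * rho x) - u 0 * v 0 = lam * (LBINT x=0..T. u x * v x * rho x)"
    using G unfolding is_normalized_ground_state_def is_eigenpair_def by blast
  have norm: "(LBINT x=0..T. (u x)\<^sup>2 * rho x) = 1"
    using G unfolding is_normalized_ground_state_def by blast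
  have lam: "lam \<le> -1/4"
    using exists_eigenpair_le_neg_quarter[OF T] G unfolding is_normalized_ground_state_def by force
  have "(LBINT x=0..T. (exp (1/4 * x) * sqrt (1 - B * x) * u x)\<^sup>2)
      = (LINT x:{0..T}|lborel. exp (x/2) * rho x * (u x)\<^sup>2)"
    unfolding interval_integral_Icc0[OF T0]
  proof (rule set_lebesgue_integral_cong)
    show "\<forall>x. x \<in> {0..T} \<longrightarrow> (exp (1/4 * x) * sqrt (1 - B * x) * u x)\<^sup>2 = exp (x/2) * rho x * (u x)\<^sup>2"
    proof (intro allI impI)
      fix x assume x: "x \<in> {0..T}"
      have "(exp (1/4 * x))\<^sup>2 = exp (x/2)" by (simp add: power2_eq_square exp_add[symmetric])
      moreover have "(sqrt (rho x))\<^sup>2 = rho x" using rho_bounds(3)[OF x] by simp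
      ultimately show "(exp (1/4 * x) * sqrt (1 - B * x) * u x)\<^sup>2 = exp (x/2) * rho x * (u x)\<^sup>2"
        by (simp add: power_mult_distrib)
    qed
  qed simp
  also have "\<dots> \<le> 24\<^sup>2"
    using exp_weighted_norm_bound[OF _ u eigen lam norm] T by simp
  finally show ?thesis using real_sqrt_le_mono by fastforce
qed

end

theorem mainTheorem13:
  shows "\<exists>C>0. \<exists>\<alpha>>0. \<exists>T0>0. \<forall>T\<ge>T0. \<forall>B::real. \<bar>B\<bar> < 1 / (3 * T) \<longrightarrow>
           (\<forall>lam u. is_normalized_ground_state B T lam u \<longrightarrow>
              sqrt (LBINT x=0..T. (exp (\<alpha> * x) * sqrt (1 - B * x) * u x)\<^sup>2) \<le> C)"
proof -
  have decay: "sqrt (LBINT x=0..T. (exp (1/4 * x) * sqrt (1 - B * x) * u x)\<^sup>2) \<le> 24"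
    if T: "3 \<le> T" and B: "\<bar>B\<bar> < 1 / (3 * T)" and G: "is_normalized_ground_state B T lam u"
    for T B lam and u :: "real \<Rightarrow> real"
  proof -
    have "\<bar>B\<bar> * T < 1/3" using B T by (simp add: field_simps)
    then interpret robin_setting B T using T by unfold_locales auto
    show ?thesis by (rule ground_state_exp_decay[OF T G])
  qed
  show ?thesis
    by (rule exI[of _ 24], rule conjI, simp, rule exI[of _ "1/4"], rule conjI, simp,
        rule exI[of _ 3], rule conjI, simp) (blast intro: decay)
qed

end
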